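(* Define real sequences by the Gauss–Legendre iteration: $a_0 = 1$, $b_0 = 1/\sqrt{2}$, $s_0 = \tfrac14$, and for $n \ge 0$ \[ a_{n+1} = \frac{a_n+b_n}{2},\quad b_{n+1} = \sqrt{a_n b_n},\quad c_{n+1} = a_n - a_{n+1},\quad s_{n+1} = s_n - 2^n c_{n+1}^2 . \] Define also sequences by the Borwein iteration: $\alpha_0 = 6-4\sqrt{2}$, $k_0 = 3-2\sqrt{2}$, and for $n\ge 0$ \[ k_n' = \sqrt{1-k_n^2},\quad k_{n+1} = \frac{1-k_n'}{1+k_n'},\quad \alpha_{n+1} = (1+k_{n+1})^2\alpha_n - 2^{n+2}k_{n+1}, \] and set $\widehat{\pi}_n = 1/\alpha_n$. Then for every $n \ge 0$, \[ \widehat{\pi}_n = \frac{a_{n+1}^2}{s_n}. \]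
   Context: All square roots are the positive real square roots; all quantities are computed in exact real arithmetic. *)

theory Defs
  imports Complex_Main
begin

fun gl_ab :: "nat \<Rightarrow> real \<times> real" where
  "gl_ab 0 = (1, 1 / sqrt 2)"
| "gl_ab (Suc n) = (let (a, b) = gl_ab n in ((a + b) / 2, sqrt (a * b)))"

definition gl_a :: "nat \<Rightarrow> real" where "gl_a n = fst (gl_ab n)"
definition gl_b :: "nat \<Rightarrow> real" where "gl_b n = snd (gl_ab n)"

text \<open>c (n+1) = a n - a (n+1); c 0 is not used.\<close>
definition gl_c :: "nat \<Rightarrow> real" where "gl_c n = gl_a (n - 1) - gl_a n"

fun gl_s :: "nat \<Rightarrow> real" where
  "gl_s 0 = 1 / 4"
| "gl_s (Suc n) = gl_s n - 2 ^ n * (gl_c (Suc n))\<^sup>2"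

fun bw_k :: "nat \<Rightarrow> real" where
  "bw_k 0 = 3 - 2 * sqrt 2"
| "bw_k (Suc n) = (1 - sqrt (1 - (bw_k n)\<^sup>2)) / (1 + sqrt (1 - (bw_k n)\<^sup>2))"

definition bw_k' :: "nat \<Rightarrow> real" where "bw_k' n = sqrt (1 - (bw_k n)\<^sup>2)"

fun bw_alpha :: "nat \<Rightarrow> real" where
  "bw_alpha 0 = 6 - 4 * sqrt 2"
| "bw_alpha (Suc n) = (1 + bw_k (Suc n))\<^sup>2 * bw_alpha n - 2 ^ (n + 2) * bw_k (Suc n)"

definition bw_pi :: "nat \<Rightarrow> real" where "bw_pi n = 1 / bw_alpha n"

end

theory Submission
  imports Defs
begin

text \<open>The Borwein modulus is the Landen modulus of the AGM pair,
  k(n) = (a(n) - b(n)) / (a(n) + b(n)): one AGM step maps k to (1 - k') / (1 + k').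
  Consequently 1 + k(n+1) = a(n+1) / a(n+2) and k(n+1) = c(n+2) / a(n+2), and together with
  c(n+1)^2 = a(n+1)^2 - b(n+1)^2 = 4 c(n+2) a(n+2) the recurrence for \<alpha> turns into the
  recurrence for s divided by a(n+2)^2. Hence \<alpha>(n) = s(n) / a(n+1)^2 by induction.\<close>

lemma sqrt_one_minus_landen_sq:
  fixes a b :: real
  assumes "a > 0" "b > 0"
  shows "sqrt (1 - ((a - b) / (a + b))\<^sup>2) = 2 * sqrt (a * b) / (a + b)"
proof -
  have "a + b \<noteq> 0" using assms by simp
  then have "1 - ((a - b) / (a + b))\<^sup>2 = ((a + b)\<^sup>2 - (a - b)\<^sup>2) / (a + b)\<^sup>2"
    by (simp add: field_simps)
  also have "\<dots> = 4 * (a * b) / (a + b)\<^sup>2"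
    by (simp add: power2_eq_square algebra_simps)
  also have "\<dots> = (2 * sqrt (a * b) / (a + b))\<^sup>2"
    using assms by (simp add: power_divide power_mult_distrib)
  finally show ?thesis
    using assms by simp
qed

lemma one_minus_over_one_plus_div:
  fixes t x :: real
  assumes "t \<noteq> 0"
  shows "(1 - x / t) / (1 + x / t) = (t - x) / (t + x)"
proof -
  have "1 - x / t = (t - x) / t" "1 + x / t = (t + x) / t"
    using assms by (simp_all add: field_simps)
  then show ?thesis
    using assms by simp
qed

lemma landen_step:
  fixes a b :: real
  assumes "a > 0" "b > 0"
  shows "(1 - sqrt (1 - ((a - b) / (a + b))\<^sup>2)) / (1 + sqrt (1 - ((a - b) / (a + b))\<^sup>2))
           = ((a + b) / 2 - sqrt (a * b)) / ((a + b) / 2 + sqrt (a * b))"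
proof -
  have half_sum: "2 * sqrt (a * b) / (a + b) = sqrt (a * b) / ((a + b) / 2)"
    by simp
  have "(a + b) / 2 \<noteq> 0"
    using assms by simp
  then show ?thesis
    unfolding sqrt_one_minus_landen_sq[OF assms] half_sum
    by (rule one_minus_over_one_plus_div)
qed

lemma agm_half_difference_sq:
  fixes a b :: real
  assumes "a \<ge> 0" "b \<ge> 0"
  shows "((a - b) / 2)\<^sup>2 = 4 * (((a + b) / 2 - sqrt (a * b)) / 2) * (((a + b) / 2 + sqrt (a * b)) / 2)"
proof -
  have "sqrt (a * b) * sqrt (a * b) = a * b"
    using assms by simp
  then show ?thesis
    by (simp add: power2_eq_square field_simps)
qed

lemma gl_a_Suc: "gl_a (Suc n) = (gl_a n + gl_b n) / 2"
  by (simp add: gl_a_def gl_b_def split: prod.splits)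

lemma gl_b_Suc: "gl_b (Suc n) = sqrt (gl_a n * gl_b n)"
  by (simp add: gl_a_def gl_b_def split: prod.splits)

lemma gl_a_b_pos: "gl_a n > 0 \<and> gl_b n > 0"
proof (induction n)
  case 0
  then show ?case by (simp add: gl_a_def gl_b_def)
next
  case (Suc n)
  then show ?case by (simp add: gl_a_Suc gl_b_Suc)
qed

lemma gl_c_Suc: "gl_c (Suc n) = (gl_a n - gl_b n) / 2"
  by (simp add: gl_c_def gl_a_Suc field_simps)

lemma gl_c_Suc_sq: "(gl_c (Suc n))\<^sup>2 = 4 * gl_c (Suc (Suc n)) * gl_a (Suc (Suc n))"
  using gl_a_b_pos[of n]
  by (simp add: gl_c_Suc gl_a_Suc[of "Suc n"] gl_a_Suc[of n] gl_b_Suc agm_half_difference_sq)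

lemma bw_k_eq_landen: "bw_k n = (gl_a n - gl_b n) / (gl_a n + gl_b n)"
proof (induction n)
  case 0
  have "1 / sqrt 2 > 0" by simp
  then have nonzero: "1 + 1 / sqrt 2 \<noteq> 0" by linarith
  have "sqrt 2 * sqrt 2 = 2" by simp
  then have "1 - 1 / sqrt 2 = (3 - 2 * sqrt 2) * (1 + 1 / sqrt 2)"
    by (simp add: field_simps)
  with nonzero have "(1 - 1 / sqrt 2) / (1 + 1 / sqrt 2) = 3 - 2 * sqrt 2"
    by simp
  then show ?case by (simp add: gl_a_def gl_b_def)
next
  case (Suc n)
  then show ?case
    using gl_a_b_pos[of n] landen_step[of "gl_a n" "gl_b n"]
    by (simp add: gl_a_Suc gl_b_Suc)
qed

lemma bw_alpha_eq: "bw_alpha n = gl_s n / (gl_a (Suc n))\<^sup>2"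
proof (induction n)
  case 0
  have a1: "gl_a (Suc 0) = (2 + sqrt 2) / 4"
    by (simp add: gl_a_Suc[of 0] gl_a_def gl_b_def field_simps)
  have "sqrt 2 * sqrt 2 = 2" by simp
  then have "(6 - 4 * sqrt 2) * ((2 + sqrt 2) / 4)\<^sup>2 = 1 / 4"
    by (simp add: power2_eq_square algebra_simps)
  moreover have "2 + sqrt 2 \<noteq> 0"
    using real_sqrt_ge_zero[of 2] by linarith
  ultimately have "6 - 4 * sqrt 2 = (1 / 4) / ((2 + sqrt 2) / 4)\<^sup>2"
    by (simp add: eq_divide_eq)
  then show ?case
    by (simp add: a1)
next
  case (Suc n)
  define a1 where "a1 = gl_a (Suc n)"
  define a2 where "a2 = gl_a (Suc (Suc n))"
  have pos: "a1 > 0" "a2 > 0"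
    using gl_a_b_pos a1_def a2_def by auto
  have k: "bw_k (Suc n) = (a1 - a2) / a2"
    using gl_a_b_pos[of "Suc n"]
    by (simp add: bw_k_eq_landen a1_def a2_def gl_a_Suc[of "Suc n"] field_simps)
  have "gl_c (Suc (Suc n)) = a1 - a2"
    by (simp add: gl_c_def a1_def a2_def)
  then have c: "(gl_c (Suc n))\<^sup>2 = 4 * (a1 - a2) * a2"
    by (simp add: gl_c_Suc_sq a2_def)
  have "bw_alpha (Suc n) = (1 + (a1 - a2) / a2)\<^sup>2 * (gl_s n / a1\<^sup>2) - 2 ^ (n + 2) * ((a1 - a2) / a2)"
    unfolding bw_alpha.simps k Suc.IH a1_def ..
  also have "\<dots> = (gl_s n - 2 ^ n * (4 * (a1 - a2) * a2)) / a2\<^sup>2"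
    using pos by (simp add: field_simps power2_eq_square power_add)
  finally show ?case
    by (simp add: c a2_def)
qed

theorem theorem1:
  fixes n :: nat
  shows "bw_pi n = (gl_a (Suc n))\<^sup>2 / gl_s n"
  by (simp add: bw_pi_def bw_alpha_eq)

end
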